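(* Let $R$ be a ring with identity and $a,b,c,y\in R$. Then: (i) $y$ is both a right $(b,c)$-inverse and a right annihilator $(b,c)$-inverse of $a$ if and only if $y$ is the hybrid $(b,c)$-inverse of $a$, i.e. $yay=y$, $yR=bR$ and $y^\circ=c^\circ$; (ii) $y$ is both a left $(b,c)$-inverse and a left annihilator $(b,c)$-inverse of $a$ if and only if $yay=y$, ${}^\circ b={}^\circ y$ and $Rc=Ry$.
   Context: For $x\in R$: $xR=\{xr:r\in R\}$, $Rx=\{rx:r\in R\}$, $x^\circ=\{r: xr=0\}$, ${}^\circ x=\{r: rx=0\}$. $y$ is a left $(b,c)$-inverse of $a$ if $Ry\subseteq Rc$ and $yab=b$; a right $(b,c)$-inverse if $yR\subseteq bR$ and $cay=c$; a right annihilator $(b,c)$-inverse if $c^\circ\subseteq y^\circ$ and $yab=b$; a left annihilator $(b,c)$-inverse if ${}^\circ b\subseteq {}^\circ y$ and $cay=c$. *)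

theory Defs
  imports Main
begin

definition rprin :: "'a::ring_1 \<Rightarrow> 'a set" where "rprin x = {x * r | r. True}"
definition lprin :: "'a::ring_1 \<Rightarrow> 'a set" where "lprin x = {r * x | r. True}"
definition rann :: "'a::ring_1 \<Rightarrow> 'a set" where "rann x = {r. x * r = 0}"
definition lann :: "'a::ring_1 \<Rightarrow> 'a set" where "lann x = {r. r * x = 0}"

definition left_bc_inverse :: "'a::ring_1 \<Rightarrow> 'a \<Rightarrow> 'a \<Rightarrow> 'a \<Rightarrow> bool" where
  "left_bc_inverse y a b c \<longleftrightarrow> lprin y \<subseteq> lprin c \<and> y * a * b = b"
definition right_bc_inverse :: "'a::ring_1 \<Rightarrow> 'a \<Rightarrow> 'a \<Rightarrow> 'a \<Rightarrow> bool" where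
  "right_bc_inverse y a b c \<longleftrightarrow> rprin y \<subseteq> rprin b \<and> c * a * y = c"
definition right_ann_bc_inverse :: "'a::ring_1 \<Rightarrow> 'a \<Rightarrow> 'a \<Rightarrow> 'a \<Rightarrow> bool" where
  "right_ann_bc_inverse y a b c \<longleftrightarrow> rann c \<subseteq> rann y \<and> y * a * b = b"
definition left_ann_bc_inverse :: "'a::ring_1 \<Rightarrow> 'a \<Rightarrow> 'a \<Rightarrow> 'a \<Rightarrow> bool" where
  "left_ann_bc_inverse y a b c \<longleftrightarrow> lann b \<subseteq> lann y \<and> c * a * y = c"

definition hybrid_bc_inverse :: "'a::ring_1 \<Rightarrow> 'a \<Rightarrow> 'a \<Rightarrow> 'a \<Rightarrow> bool" where
  "hybrid_bc_inverse y a b c \<longleftrightarrow> y * a * y = y \<and> rprin y = rprin b \<and> rann y = rann c"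

end

theory Submission
  imports Defs
begin

text \<open>Both parts rest on two observations. An inclusion of principal right ideals
\<open>xR \<subseteq> zR\<close> means \<open>x = zr\<close>, and then \<open>z\<^sup>\<circ> \<subseteq> x\<^sup>\<circ>\<close>. Conversely an inclusion
\<open>y\<^sup>\<circ> \<subseteq> c\<^sup>\<circ>\<close> transports \<open>yx = y\<close> to \<open>cx = c\<close>, since \<open>x - 1 \<in> y\<^sup>\<circ>\<close>. With
\<open>x = ay\<close> this turns \<open>yay = y\<close> into \<open>cay = c\<close>; part (ii) is the left-right mirror.\<close>

lemma rprin_subset_iff: "rprin x \<subseteq> rprin z \<longleftrightarrow> (\<exists>r. x = z * r)"
proof
  assume "rprin x \<subseteq> rprin z"
  moreover have "x \<in> rprin x"
    unfolding rprin_def by (auto intro: exI[of _ 1])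
  ultimately show "\<exists>r. x = z * r"
    unfolding rprin_def by auto
qed (auto simp: rprin_def mult.assoc)

lemma lprin_subset_iff: "lprin x \<subseteq> lprin z \<longleftrightarrow> (\<exists>r. x = r * z)"
proof
  assume "lprin x \<subseteq> lprin z"
  moreover have "x \<in> lprin x"
    unfolding lprin_def by (auto intro: exI[of _ 1])
  ultimately show "\<exists>r. x = r * z"
    unfolding lprin_def by auto
qed (auto simp flip: mult.assoc simp: lprin_def)

lemma rann_subset_rann_mult_left: "rann z \<subseteq> rann (w * z)"
  unfolding rann_def by (auto simp: mult.assoc)

lemma lann_subset_lann_mult_right: "lann z \<subseteq> lann (z * w)"
  unfolding lann_def by (auto simp flip: mult.assoc)

lemma mult_fixed_if_rann_subset:
  assumes "rann y \<subseteq> rann c" and "y * x = y"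
  shows "c * x = c"
proof -
  have "y * (x - 1) = 0"
    using assms(2) by (simp add: right_diff_distrib)
  with assms(1) have "c * (x - 1) = 0"
    unfolding rann_def by auto
  then show ?thesis
    by (simp add: right_diff_distrib)
qed

lemma mult_fixed_if_lann_subset:
  assumes "lann y \<subseteq> lann b" and "x * y = y"
  shows "x * b = b"
proof -
  have "(x - 1) * y = 0"
    using assms(2) by (simp add: left_diff_distrib)
  with assms(1) have "(x - 1) * b = 0"
    unfolding lann_def by auto
  then show ?thesis
    by (simp add: left_diff_distrib)
qed

lemma right_and_right_ann_bc_inverse_iff_hybrid:
  "right_bc_inverse y a b c \<and> right_ann_bc_inverse y a b c \<longleftrightarrow> hybrid_bc_inverse y a b c"
proof
  assume "right_bc_inverse y a b c \<and> right_ann_bc_inverse y a b c"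
  then have yR: "rprin y \<subseteq> rprin b" and cay: "c * a * y = c"
    and ann: "rann c \<subseteq> rann y" and yab: "y * a * b = b"
    unfolding right_bc_inverse_def right_ann_bc_inverse_def by auto
  from yR obtain r where "y = b * r"
    by (auto simp: rprin_subset_iff)
  with yab have "y * a * y = y"
    by (metis mult.assoc)
  moreover have "rprin b \<subseteq> rprin y"
    using yab by (metis rprin_subset_iff mult.assoc)
  moreover have "rann y \<subseteq> rann c"
    using rann_subset_rann_mult_left[of y "c * a"] cay by simp
  ultimately show "hybrid_bc_inverse y a b c"
    using yR ann unfolding hybrid_bc_inverse_def by auto
next
  assume "hybrid_bc_inverse y a b c"
  then have yay: "y * a * y = y" and yR: "rprin y = rprin b" and ann: "rann y = rann c"
    unfolding hybrid_bc_inverse_def by auto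
  from yR obtain s where "b = y * s"
    by (metis order_refl rprin_subset_iff)
  with yay have "y * a * b = b"
    by (metis mult.assoc)
  moreover have "c * a * y = c"
    using mult_fixed_if_rann_subset[of y c "a * y"] ann yay by (simp add: mult.assoc)
  ultimately show "right_bc_inverse y a b c \<and> right_ann_bc_inverse y a b c"
    using yR ann unfolding right_bc_inverse_def right_ann_bc_inverse_def by auto
qed

lemma left_and_left_ann_bc_inverse_iff:
  "left_bc_inverse y a b c \<and> left_ann_bc_inverse y a b c \<longleftrightarrow>
     y * a * y = y \<and> lann b = lann y \<and> lprin c = lprin y"
proof
  assume "left_bc_inverse y a b c \<and> left_ann_bc_inverse y a b c"
  then have Ry: "lprin y \<subseteq> lprin c" and cay: "c * a * y = c"
    and ann: "lann b \<subseteq> lann y" and yab: "y * a * b = b"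
    unfolding left_bc_inverse_def left_ann_bc_inverse_def by auto
  from Ry obtain r where "y = r * c"
    by (auto simp: lprin_subset_iff)
  with cay have "y * a * y = y"
    by (metis mult.assoc)
  moreover have "lprin c \<subseteq> lprin y"
    using cay by (metis lprin_subset_iff)
  moreover have "lann y \<subseteq> lann b"
    using lann_subset_lann_mult_right[of y "a * b"] yab by (simp add: mult.assoc)
  ultimately show "y * a * y = y \<and> lann b = lann y \<and> lprin c = lprin y"
    using Ry ann by auto
next
  assume "y * a * y = y \<and> lann b = lann y \<and> lprin c = lprin y"
  then have yay: "y * a * y = y" and ann: "lann b = lann y" and Rc: "lprin c = lprin y"
    by auto
  from Rc obtain s where "c = s * y"
    by (metis order_refl lprin_subset_iff)
  with yay have "c * a * y = c"
    by (metis mult.assoc)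
  moreover have "y * a * b = b"
    using mult_fixed_if_lann_subset[of y b "y * a"] ann yay by simp
  ultimately show "left_bc_inverse y a b c \<and> left_ann_bc_inverse y a b c"
    using Rc ann unfolding left_bc_inverse_def left_ann_bc_inverse_def by auto
qed

theorem theorem2p10:
  fixes a b c y :: "'a::ring_1"
  shows "(right_bc_inverse y a b c \<and> right_ann_bc_inverse y a b c \<longleftrightarrow> hybrid_bc_inverse y a b c)
       \<and> (left_bc_inverse y a b c \<and> left_ann_bc_inverse y a b c \<longleftrightarrow>
            y * a * y = y \<and> lann b = lann y \<and> lprin c = lprin y)"
  using right_and_right_ann_bc_inverse_iff_hybrid left_and_left_ann_bc_inverse_iff by blast

end
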